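(* Let $G$ be a finite simple graph on vertex set $\{x_1,\dots,x_n\}$ with $\operatorname{mat}(G)\geq 2$, let $\Bbbk$ be a field and $S=\Bbbk[x_1,\dots,x_n]$. Then $\operatorname{reg}(I(G)^{[2]})\geq \operatorname{aim}(G,2)+2$.
   Context: $I(G)\subseteq S$ is the edge ideal. $\operatorname{mat}(G)$ is the matching number. $I(G)^{[2]}$ is the ideal generated by the products $e_1e_2$ over all matchings $\{e_1,e_2\}$ of size $2$ (edge $\{x_i,x_j\}$ identified with $x_ix_j$). $\operatorname{reg}$ is Castelnuovo–Mumford regularity. Two edges form a gap if they are disjoint and no edge of $G$ joins a vertex of one to a vertex of the other. A sequence $(a_1,\dots,a_n)$ of integers is $k$-admissable if $a_i\ge1$ for all $i$ and $\sum a_i\le n+k-1$. For $1\le k\le\operatorname{mat}(G)$, a matching $M$ is $k$-admissable if there are nonempty pairwise disjoint $M_1,\dots,M_r\subseteq M$ with union $M$ such that edges from different $M_i$'s always form a gap in $G$, $(|M_1|,\dots,|M_r|)$ is $k$-admissable, and the induced subgraph of $G$ on $\bigcup_{e\in M_i}e$ is a forest for each $i$. $\operatorname{aim}(G,k)$ is the maximum size of a $k$-admissable matching ($0$ if none). *)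

theory Defs
  imports Main "HOL-Library.Extended_Real" "HOL-Library.Function_Algebras"
begin

text \<open>A finite simple graph on the vertex set {0..<n} (vertex i stands for x_(i+1))
  is given by its set E of edges, each edge a 2-element subset of {0..<n}.\<close>

definition simple_graph :: "nat \<Rightarrow> nat set set \<Rightarrow> bool" where
  "simple_graph n E \<longleftrightarrow> (\<forall>e\<in>E. card e = 2 \<and> e \<subseteq> {..<n})"

definition is_matching :: "nat set set \<Rightarrow> nat set set \<Rightarrow> bool" where
  "is_matching E M \<longleftrightarrow> M \<subseteq> E \<and> (\<forall>e1\<in>M. \<forall>e2\<in>M. e1 \<noteq> e2 \<longrightarrow> e1 \<inter> e2 = {})"

definition matching_number :: "nat set set \<Rightarrow> nat" where
  "matching_number E = Max {card M | M. is_matching E M}"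

definition is_gap :: "nat set set \<Rightarrow> nat set \<Rightarrow> nat set \<Rightarrow> bool" where
  "is_gap E e1 e2 \<longleftrightarrow> e1 \<inter> e2 = {} \<and>
     \<not> (\<exists>u\<in>e1. \<exists>v\<in>e2. {u, v} \<in> E)"

definition has_cycle :: "nat set set \<Rightarrow> bool" where
  "has_cycle F \<longleftrightarrow> (\<exists>vs. length vs \<ge> 3 \<and> distinct vs \<and>
      (\<forall>i < length vs. {vs ! i, vs ! ((i + 1) mod length vs)} \<in> F))"

definition is_forest :: "nat set set \<Rightarrow> bool" where
  "is_forest F \<longleftrightarrow> \<not> has_cycle F"

definition induced_edges :: "nat set set \<Rightarrow> nat set \<Rightarrow> nat set set" where
  "induced_edges E W = {e \<in> E. e \<subseteq> W}"

definition admissible_seq :: "nat \<Rightarrow> nat list \<Rightarrow> bool" where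
  "admissible_seq k as \<longleftrightarrow> (\<forall>a\<in>set as. a \<ge> 1) \<and> int (sum_list as) \<le> int (length as) + int k - 1"

definition admissible_matching :: "nat set set \<Rightarrow> nat \<Rightarrow> nat set set \<Rightarrow> bool" where
  "admissible_matching E k M \<longleftrightarrow> is_matching E M \<and>
     (\<exists>Ms :: nat set set list.
        (\<forall>B\<in>set Ms. B \<noteq> {}) \<and>
        (\<forall>i < length Ms. \<forall>j < length Ms. i \<noteq> j \<longrightarrow> Ms ! i \<inter> Ms ! j = {}) \<and>
        \<Union>(set Ms) = M \<and>
        (\<forall>i < length Ms. \<forall>j < length Ms. i \<noteq> j \<longrightarrow>
            (\<forall>e1\<in>Ms ! i. \<forall>e2\<in>Ms ! j. is_gap E e1 e2)) \<and>
        admissible_seq k (map card Ms) \<and>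
        (\<forall>B\<in>set Ms. is_forest (induced_edges E (\<Union>B))))"

definition aim :: "nat set set \<Rightarrow> nat \<Rightarrow> nat" where
  "aim E k = Max ({card M | M. admissible_matching E k M} \<union> {0})"

text \<open>Monomials of S = k[x_1..x_n] are represented by exponent vectors a :: nat => nat
  (supported in {0..<n}). A monomial ideal is given by a set of generating monomials;
  x^a lies in the ideal iff some generator divides it.\<close>
definition in_monideal :: "(nat \<Rightarrow> nat) set \<Rightarrow> (nat \<Rightarrow> nat) \<Rightarrow> bool" where
  "in_monideal Gens a \<longleftrightarrow> (\<exists>g\<in>Gens. \<forall>i. g i \<le> a i)"

definition sqfree_mon :: "nat set \<Rightarrow> (nat \<Rightarrow> nat)" where
  "sqfree_mon A = (\<lambda>i. if i \<in> A then 1 else 0)"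

text \<open>Generators of I(G)^[2]: products e1*e2 over matchings {e1,e2} of size 2.\<close>
definition sq_power2_gens :: "nat set set \<Rightarrow> (nat \<Rightarrow> nat) set" where
  "sq_power2_gens E = {sqfree_mon (e1 \<union> e2) | e1 e2. e1 \<in> E \<and> e2 \<in> E \<and> e1 \<noteq> e2 \<and> e1 \<inter> e2 = {}}"

text \<open>Koszul complex K(x_1..x_n; I) in multidegree a. Tor_i^S(I,k)_a is its i-th homology.
  Its degree-a, homological-degree-i component has k-basis the elements x^(a - F) e_F
  with F a subset of {0..<n}, |F| = i, F contained in the support of a and x^(a-F) in I.\<close>
definition kos_basis :: "nat \<Rightarrow> (nat \<Rightarrow> nat) set \<Rightarrow> nat \<Rightarrow> (nat \<Rightarrow> nat) \<Rightarrow> nat set set" where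
  "kos_basis n Gens i a = {F. F \<subseteq> {..<n} \<and> card F = i \<and> (\<forall>j\<in>F. 1 \<le> a j) \<and>
       in_monideal Gens (\<lambda>l. a l - sqfree_mon F l)}"

definition kos_chains :: "nat \<Rightarrow> (nat \<Rightarrow> nat) set \<Rightarrow> nat \<Rightarrow> (nat \<Rightarrow> nat) \<Rightarrow> (nat set \<Rightarrow> 'k::field) set" where
  "kos_chains n Gens i a = {f. \<forall>F. F \<notin> kos_basis n Gens i a \<longrightarrow> f F = 0}"

text \<open>Koszul differential: d(m e_F) = sum_{j in F} (-1)^{#\{l in F. l < j\}} x_j m e_(F-{j}).\<close>
definition kos_coeff :: "nat set \<Rightarrow> nat set \<Rightarrow> 'k::field" where
  "kos_coeff F G = (if \<exists>j\<in>F. G = F - {j}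
      then (- 1) ^ card {l \<in> F. l < (THE j. j \<in> F \<and> G = F - {j})} else 0)"

definition kos_diff :: "nat \<Rightarrow> (nat \<Rightarrow> nat) set \<Rightarrow> nat \<Rightarrow> (nat \<Rightarrow> nat) \<Rightarrow> (nat set \<Rightarrow> 'k::field) \<Rightarrow> (nat set \<Rightarrow> 'k)" where
  "kos_diff n Gens i a f = (\<lambda>G. if 0 < i \<and> G \<in> kos_basis n Gens (i - 1) a
      then (\<Sum>F\<in>kos_basis n Gens i a. kos_coeff F G * f F) else 0)"

abbreviation fun_scale :: "'k::field \<Rightarrow> (nat set \<Rightarrow> 'k) \<Rightarrow> (nat set \<Rightarrow> 'k)" where
  "fun_scale c f \<equiv> (\<lambda>x. c * f x)"

text \<open>Multigraded Betti number beta_(i,a)(I) = dim_k Tor_i^S(I,k)_a.\<close>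
definition betti :: "'k::field itself \<Rightarrow> nat \<Rightarrow> (nat \<Rightarrow> nat) set \<Rightarrow> nat \<Rightarrow> (nat \<Rightarrow> nat) \<Rightarrow> nat" where
  "betti TYPE('k) n Gens i a =
     vector_space.dim (fun_scale :: 'k \<Rightarrow> _)
        {f \<in> kos_chains n Gens i a. kos_diff n Gens i a f = 0}
   - vector_space.dim (fun_scale :: 'k \<Rightarrow> _)
        (kos_diff n Gens (i + 1) a ` kos_chains n Gens (i + 1) a)"

definition reg :: "'k::field itself \<Rightarrow> nat \<Rightarrow> (nat \<Rightarrow> nat) set \<Rightarrow> ereal" where
  "reg K n Gens = Sup {ereal (real (sum a {..<n}) - real i) | i a.
      (\<forall>l. l \<ge> n \<longrightarrow> a l = 0) \<and> betti K n Gens i a \<noteq> 0}"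

end

theory Submission
  imports Defs
begin

text \<open>Take a 2-admissible matching M of maximal size m (or, if aim(G,2) < 2, any
  matching with two edges). For k = 2 at most one part of the decomposition has two edges, so M
  contains edges e1, e2 such that every other edge of M forms a gap with all edges of M. Let W be
  the vertex set of M; we show that the Betti number of I(G)^[2] in homological degree m - 2 and
  squarefree multidegree W is nonzero, whence reg >= 2m - (m - 2) = m + 2.

  In the Koszul complex in degree W, the basis vectors are the e_F such that W - F contains two
  disjoint edges. Let R = M - {e1, e2} and let \<sigma> consist of a vertex p of e1 and the least
  vertex of every edge of R. Every facet of \<sigma> is a basis vector, so the boundary z of e_\<sigma>
  is a cycle. It is not a boundary: the cochain that is 0 off the transversals of R and (-1)^N on a
  transversal, N the number of pairs of its vertices ordered oppositely to the least vertices of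
  their edges, is a cocycle, and it pairs to 1 or -1 with z because the only
  transversal facet of \<sigma> is \<sigma> - {p}. The cocycle property holds because a basis vector
  e_F of degree m - 1 with a transversal facet F - {w} has w on some edge r of R (the gap
  condition confines the edges avoiding F to e1 and e2), and then F has exactly two transversal
  facets, F - {w} and F - {t} with {t, w} = F \<inter> r, whose contributions cancel.\<close>

section \<open>Koszul homology\<close>

lemma kos_coeff_Diff_singleton:
  assumes "j \<in> F"
  shows "kos_coeff F (F - {j}) = ((- 1) ^ card {l \<in> F. l < j} :: 'k::field)"
proof -
  have "(THE j'. j' \<in> F \<and> F - {j} = F - {j'}) = j"
    using assms by (intro the_equality) (simp, metis Diff_iff insertI1 singletonD)
  then show ?thesis using assms unfolding kos_coeff_def by auto
qed

lemma kos_coeff_neq_0_imp: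
  assumes "(kos_coeff F G :: 'k::field) \<noteq> 0"
  obtains j where "j \<in> F" "G = F - {j}"
  using assms unfolding kos_coeff_def by (auto split: if_splits)

lemma kos_coeff_square_cancel:
  assumes "finite F" "j \<in> F" "k \<in> F" "j \<noteq> k"
  shows "kos_coeff F (F - {j}) * kos_coeff (F - {j}) (F - {j} - {k}) +
         kos_coeff F (F - {k}) * kos_coeff (F - {k}) (F - {k} - {j}) = (0 :: 'k::field)"
proof -
  have less: "kos_coeff F (F - {j}) * kos_coeff (F - {j}) (F - {j} - {k}) +
         kos_coeff F (F - {k}) * kos_coeff (F - {k}) (F - {k} - {j}) = (0 :: 'k)"
    if "j \<in> F" "k \<in> F" "j < k" for j k
  proof -
    have "{l \<in> F. l < k} = insert j {l \<in> F - {j}. l < k}" using that by auto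
    then have "card {l \<in> F. l < k} = Suc (card {l \<in> F - {j}. l < k})"
      using \<open>finite F\<close> by simp
    moreover have "{l \<in> F - {k}. l < j} = {l \<in> F. l < j}" using that by auto
    ultimately show ?thesis using that by (simp add: kos_coeff_Diff_singleton)
  qed
  show ?thesis
    using less[of j k] less[of k j] assms by (cases "j < k") (auto simp: add.commute)
qed

lemma sum_kos_coeff_kos_coeff:
  assumes "finite K" "finite F" "\<And>j. j \<in> F \<Longrightarrow> F - {j} \<in> K"
  shows "(\<Sum>G\<in>K. kos_coeff G H * kos_coeff F G) = (0 :: 'k::field)"
proof (cases "\<exists>j k. j \<in> F \<and> k \<in> F \<and> j \<noteq> k \<and> H = F - {j} - {k}")
  case True
  then obtain j k where jk: "j \<in> F" "k \<in> F" "j \<noteq> k" "H = F - {j} - {k}" by blast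
  have "kos_coeff G H * kos_coeff F G = (0::'k)" if "G \<in> K - {F - {j}, F - {k}}" for G
  proof (rule ccontr)
    assume "kos_coeff G H * kos_coeff F G \<noteq> (0::'k)"
    then obtain x y where "x \<in> F" "G = F - {x}" "y \<in> G" "H = G - {y}"
      by (metis kos_coeff_neq_0_imp mult_not_zero)
    then show False using that jk by auto
  qed
  then have "(\<Sum>G\<in>K. kos_coeff G H * kos_coeff F G :: 'k)
      = (\<Sum>G\<in>{F - {j}, F - {k}}. kos_coeff G H * kos_coeff F G)"
    using assms jk by (intro sum.mono_neutral_right) auto
  also have "\<dots> = kos_coeff F (F - {j}) * kos_coeff (F - {j}) (F - {j} - {k}) +
         kos_coeff F (F - {k}) * kos_coeff (F - {k}) (F - {k} - {j})"
  proof -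
    have "F - {j} \<noteq> F - {k}" using jk by auto
    then show ?thesis using jk(4) by (simp add: Diff_insert2[symmetric] insert_commute mult.commute)
  qed
  also have "\<dots> = 0" using kos_coeff_square_cancel assms(2) jk(1-3) .
  finally show ?thesis .
next
  case False
  have "kos_coeff G H * kos_coeff F G = (0::'k)" for G
  proof (rule ccontr)
    assume "kos_coeff G H * kos_coeff F G \<noteq> (0::'k)"
    then obtain x y where "x \<in> F" "G = F - {x}" "y \<in> G" "H = G - {y}"
      by (metis kos_coeff_neq_0_imp mult_not_zero)
    then show False using False by auto
  qed
  then show ?thesis by (intro sum.neutral) auto
qed

lemma finite_kos_basis: "finite (kos_basis n Gens i a)"
  by (rule finite_subset[of _ "Pow {..<n}"]) (auto simp: kos_basis_def)

lemma kos_basis_finite: "F \<in> kos_basis n Gens i a \<Longrightarrow> finite F"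
  unfolding kos_basis_def by (auto intro: finite_subset)

lemma kos_basis_Diff_singleton:
  assumes "F \<in> kos_basis n Gens (Suc i) a" "j \<in> F"
  shows "F - {j} \<in> kos_basis n Gens i a"
proof -
  obtain g where g: "g \<in> Gens" "\<forall>l. g l \<le> a l - sqfree_mon F l"
    using assms(1) unfolding kos_basis_def in_monideal_def by auto
  moreover have "sqfree_mon (F - {j}) l \<le> sqfree_mon F l" for l
    by (simp add: sqfree_mon_def)
  ultimately have "\<forall>l. g l \<le> a l - sqfree_mon (F - {j}) l"
    by (meson diff_le_mono2 order_trans)
  then show ?thesis using assms g(1) kos_basis_finite[OF assms(1)]
    unfolding kos_basis_def in_monideal_def by auto
qed

lemma kos_diff_kos_diff:
  "kos_diff n Gens i a (kos_diff n Gens (Suc i) a g :: nat set \<Rightarrow> 'k::field) = 0"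
proof
  fix H
  let ?K = "kos_basis n Gens i a" and ?K1 = "kos_basis n Gens (Suc i) a"
  have "(\<Sum>G\<in>?K. kos_coeff G H * (\<Sum>F\<in>?K1. kos_coeff F G * g F) :: 'k)
      = (\<Sum>F\<in>?K1. g F * (\<Sum>G\<in>?K. kos_coeff G H * kos_coeff F G))"
    by (simp add: sum_distrib_left mult_ac sum.swap[of _ ?K])
  also have "\<dots> = 0"
    by (intro sum.neutral ballI)
      (simp add: sum_kos_coeff_kos_coeff finite_kos_basis kos_basis_finite kos_basis_Diff_singleton)
  finally show "kos_diff n Gens i a (kos_diff n Gens (Suc i) a g) H = 0 H"
    unfolding kos_diff_def by (auto intro!: sum.neutral)
qed

lemma kos_diff_boundary_eq_0:
  assumes "finite \<sigma>" "\<And>x. x \<in> \<sigma> \<Longrightarrow> \<sigma> - {x} \<in> kos_basis n Gens i a"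
  shows "kos_diff n Gens i a (\<lambda>F. if F \<in> kos_basis n Gens i a then kos_coeff \<sigma> F else 0) = (0 :: nat set \<Rightarrow> 'k::field)"
proof
  fix H
  have "(\<Sum>G\<in>kos_basis n Gens i a. kos_coeff G H * (if G \<in> kos_basis n Gens i a then kos_coeff \<sigma> G else 0))
      = (\<Sum>G\<in>kos_basis n Gens i a. kos_coeff G H * kos_coeff \<sigma> G :: 'k)"
    by (rule sum.cong) auto
  also have "\<dots> = 0" using sum_kos_coeff_kos_coeff finite_kos_basis assms .
  finally show "kos_diff n Gens i a (\<lambda>F. if F \<in> kos_basis n Gens i a then kos_coeff \<sigma> F else 0) H
      = (0 :: nat set \<Rightarrow> 'k) H"
    unfolding kos_diff_def by simp
qed

lemma vector_space_fun_scale: "vector_space (fun_scale :: 'k::field \<Rightarrow> (nat set \<Rightarrow> 'k) \<Rightarrow> _)"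
  by unfold_locales (auto simp: algebra_simps fun_eq_iff)

lemma (in vector_space) dim_less_if_not_in_span:
  assumes "S \<subseteq> T" "x \<in> T" "x \<notin> span S" "T \<subseteq> span C" "finite C"
  shows "dim S < dim T"
proof -
  obtain B where B: "B \<subseteq> S" "independent B" "S \<subseteq> span B" "card B = dim S"
    by (rule basis_exists)
  obtain B' where B': "B' \<subseteq> T" "independent B'" "T \<subseteq> span B'" "card B' = dim T"
    by (rule basis_exists)
  have "finite B'" using independent_span_bound[OF assms(5) B'(2)] B'(1) assms(4) by auto
  have "x \<notin> span B" using assms(3) span_mono[OF B(1)] by auto
  then have "x \<notin> B" using span_base by blast
  have "independent (insert x B)" using independent_insertI[OF \<open>x \<notin> span B\<close> B(2)] .
  moreover have "insert x B \<subseteq> span B'" using B(1) assms(1,2) B'(3) by auto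
  ultimately have "finite (insert x B) \<and> card (insert x B) \<le> card B'"
    by (rule independent_span_bound[OF \<open>finite B'\<close>])
  then show ?thesis using B(4) B'(4) \<open>x \<notin> B\<close> by auto
qed

lemma sum_fun_apply: "(\<Sum>x\<in>A. f x :: 'a \<Rightarrow> 'b::comm_monoid_add) y = (\<Sum>x\<in>A. f x y)"
  by (induction A rule: infinite_finite_induct) auto

lemma kos_chains_subset_span:
  "kos_chains n Gens i a \<subseteq>
     module.span (fun_scale :: 'k::field \<Rightarrow> _) ((\<lambda>F G. if G = F then 1 else 0) ` kos_basis n Gens i a)"
proof
  interpret vs: vector_space "fun_scale :: 'k \<Rightarrow> (nat set \<Rightarrow> 'k) \<Rightarrow> _"
    by (rule vector_space_fun_scale)
  let ?K = "kos_basis n Gens i a"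
  fix f :: "nat set \<Rightarrow> 'k" assume f: "f \<in> kos_chains n Gens i a"
  have "f = (\<Sum>F\<in>?K. fun_scale (f F) (\<lambda>G. if G = F then 1 else 0))"
  proof
    fix G
    show "f G = (\<Sum>F\<in>?K. fun_scale (f F) (\<lambda>G. if G = F then 1 else 0)) G"
      using f finite_kos_basis[of n Gens i a]
      by (cases "G \<in> ?K") (auto simp: kos_chains_def sum_fun_apply if_distrib cong: if_cong)
  qed
  also have "\<dots> \<in> vs.span ((\<lambda>F G. if G = F then 1 else 0) ` ?K)"
    by (intro vs.span_sum vs.span_scale vs.span_base) auto
  finally show "f \<in> vs.span ((\<lambda>F G. if G = F then 1 else 0) ` ?K)" .
qed

lemma betti_neq_0_if_cocycle_pairing:
  fixes z c :: "nat set \<Rightarrow> 'k::field"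
  assumes z: "z \<in> kos_chains n Gens i a" "kos_diff n Gens i a z = 0"
    and c: "\<And>F. F \<in> kos_basis n Gens (Suc i) a \<Longrightarrow> (\<Sum>G\<in>kos_basis n Gens i a. c G * kos_coeff F G) = 0"
    and pairing: "(\<Sum>G\<in>kos_basis n Gens i a. c G * z G) \<noteq> 0"
  shows "betti TYPE('k) n Gens i a \<noteq> 0"
proof -
  interpret vs: vector_space "fun_scale :: 'k \<Rightarrow> (nat set \<Rightarrow> 'k) \<Rightarrow> _"
    by (rule vector_space_fun_scale)
  let ?K = "kos_basis n Gens i a"
  define cycles :: "(nat set \<Rightarrow> 'k) set" where "cycles = {f \<in> kos_chains n Gens i a. kos_diff n Gens i a f = 0}"
  define boundaries :: "(nat set \<Rightarrow> 'k) set" where "boundaries = kos_diff n Gens (i + 1) a ` kos_chains n Gens (i + 1) a"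
  define annihilator :: "(nat set \<Rightarrow> 'k) set" where "annihilator = {f. (\<Sum>G\<in>?K. c G * f G) = 0}"
  have "boundaries \<subseteq> cycles"
  proof
    fix f assume "f \<in> boundaries"
    then obtain g where f: "f = kos_diff n Gens (Suc i) a g" by (auto simp: boundaries_def)
    then show "f \<in> cycles"
      using kos_diff_kos_diff[of n Gens i a g] by (auto simp: cycles_def kos_chains_def kos_diff_def)
  qed
  have "boundaries \<subseteq> annihilator"
  proof
    fix f assume "f \<in> boundaries"
    then obtain g where f: "f = kos_diff n Gens (Suc i) a g" by (auto simp: boundaries_def)
    have "(\<Sum>G\<in>?K. c G * f G)
        = (\<Sum>F\<in>kos_basis n Gens (Suc i) a. g F * (\<Sum>G\<in>?K. c G * kos_coeff F G))"
      unfolding f kos_diff_def by (simp add: sum_distrib_left mult_ac sum.swap[of _ ?K])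
    also have "\<dots> = 0" using c by simp
    finally show "f \<in> annihilator" by (simp add: annihilator_def)
  qed
  moreover have "vs.subspace annihilator"
  proof -
    have "(\<Sum>G\<in>?K. c G * (t * f G)) = t * (\<Sum>G\<in>?K. c G * f G)" for t f
      by (simp add: sum_distrib_left mult_ac)
    then show ?thesis
      unfolding vs.subspace_def annihilator_def by (simp add: distrib_left sum.distrib)
  qed
  ultimately have "vs.span boundaries \<subseteq> annihilator" by (rule vs.span_minimal)
  then have "z \<notin> vs.span boundaries" using pairing by (auto simp: annihilator_def)
  moreover have "z \<in> cycles" using z by (simp add: cycles_def)
  moreover have "cycles \<subseteq> vs.span ((\<lambda>F G. if G = F then 1 else 0) ` ?K)"
    using kos_chains_subset_span unfolding cycles_def by blast
  ultimately have "vs.dim boundaries < vs.dim cycles"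
    using \<open>boundaries \<subseteq> cycles\<close> finite_imageI[OF finite_kos_basis]
    by (intro vs.dim_less_if_not_in_span)
  then show ?thesis by (simp add: betti_def cycles_def boundaries_def)
qed

lemma reg_ge_if_betti_neq_0:
  assumes "\<forall>l\<ge>n. a l = 0" "betti K n Gens i a \<noteq> 0"
  shows "ereal (real (sum a {..<n}) - real i) \<le> reg K n Gens"
  unfolding reg_def by (rule Sup_upper) (use assms in auto)

section \<open>The Koszul basis of I(G)^[2] in squarefree degrees\<close>

definition two_disjoint_edges_in :: "nat set set \<Rightarrow> nat set \<Rightarrow> bool" where
  "two_disjoint_edges_in E U \<longleftrightarrow> (\<exists>e f. e \<in> E \<and> f \<in> E \<and> e \<noteq> f \<and> e \<inter> f = {} \<and> e \<union> f \<subseteq> U)"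

lemma in_monideal_sq_power2_gens_sqfree_mon:
  "in_monideal (sq_power2_gens E) (sqfree_mon U) \<longleftrightarrow> two_disjoint_edges_in E U"
proof
  assume "in_monideal (sq_power2_gens E) (sqfree_mon U)"
  then obtain e f where ef: "\<forall>i. sqfree_mon (e \<union> f) i \<le> sqfree_mon U i"
      "e \<in> E" "f \<in> E" "e \<noteq> f" "e \<inter> f = {}"
    unfolding in_monideal_def sq_power2_gens_def by blast
  have "e \<union> f \<subseteq> U"
  proof
    fix x assume "x \<in> e \<union> f"
    then show "x \<in> U" using ef(1)[rule_format, of x] by (auto simp: sqfree_mon_def split: if_splits)
  qed
  then show "two_disjoint_edges_in E U" using ef unfolding two_disjoint_edges_in_def by blast
next
  assume "two_disjoint_edges_in E U"
  then obtain e f where ef: "e \<in> E" "f \<in> E" "e \<noteq> f" "e \<inter> f = {}" "e \<union> f \<subseteq> U"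
    unfolding two_disjoint_edges_in_def by blast
  then have "sqfree_mon (e \<union> f) \<in> sq_power2_gens E" unfolding sq_power2_gens_def by blast
  moreover have "\<forall>i. sqfree_mon (e \<union> f) i \<le> sqfree_mon U i"
    using ef(5) by (auto simp: sqfree_mon_def)
  ultimately show "in_monideal (sq_power2_gens E) (sqfree_mon U)"
    unfolding in_monideal_def by blast
qed

lemma kos_basis_sq_power2_gens:
  assumes "W \<subseteq> {..<n}"
  shows "F \<in> kos_basis n (sq_power2_gens E) j (sqfree_mon W) \<longleftrightarrow>
    F \<subseteq> W \<and> card F = j \<and> two_disjoint_edges_in E (W - F)"
proof -
  have "(\<forall>x\<in>F. 1 \<le> sqfree_mon W x) \<longleftrightarrow> F \<subseteq> W" by (auto simp: sqfree_mon_def)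
  moreover have "(\<lambda>l. sqfree_mon W l - sqfree_mon F l) = sqfree_mon (W - F)"
    by (auto simp: sqfree_mon_def)
  ultimately show ?thesis
    using assms by (auto simp: kos_basis_def in_monideal_sq_power2_gens_sqfree_mon)
qed

section \<open>Signs of transversals\<close>

definition inversions :: "(nat \<Rightarrow> nat) \<Rightarrow> nat set \<Rightarrow> nat" where
  "inversions key G = (\<Sum>x\<in>G. \<Sum>y\<in>G. if x < y \<and> key y < key x then 1 else 0)"

lemma inversions_insert:
  assumes "finite G" "x \<notin> G"
  shows "inversions key (insert x G) = inversions key G
    + (\<Sum>y\<in>G. if x < y \<and> key y < key x then 1 else 0)
    + (\<Sum>y\<in>G. if y < x \<and> key x < key y then 1 else 0)"
  using assms unfolding inversions_def by (simp add: sum.distrib)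

lemma card_less_eq_sum: "finite G \<Longrightarrow> card {l \<in> G. l < x} = (\<Sum>y\<in>G. if y < x then 1 else 0)"
  by (simp add: sum.If_cases Int_def conj_commute)

text \<open>Both exponents count inversions and smaller elements of F - {a, b} relative to a and b.
  Since a and b share their key and every other key differs from it, each y in F - {a, b}
  contributes an even amount to the total, while a itself contributes one (as l < b).\<close>

lemma odd_inversions_swap:
  assumes "finite F" "a \<in> F" "b \<in> F" "a < b" "key a = key b"
    and others: "\<And>y. y \<in> F - {a, b} \<Longrightarrow> key y \<noteq> key a"
  shows "odd (inversions key (F - {a}) + card {l \<in> F. l < a}
    + (inversions key (F - {b}) + card {l \<in> F. l < b}))"
proof -
  define F' where "F' = F - {a, b}"
  have "finite F'" "a \<notin> F'" "b \<notin> F'" using assms(1) by (auto simp: F'_def)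
  have F_a: "F - {a} = insert b F'" and F_b: "F - {b} = insert a F'"
    using assms(2-4) by (auto simp: F'_def)
  have less_a: "{l \<in> F. l < a} = {l \<in> F'. l < a}"
    and less_b: "{l \<in> F. l < b} = insert a {l \<in> F'. l < b}"
    using assms(2-4) by (auto simp: F'_def)
  define h where "h y = (if key y < key a then 1 else (if y < a then 1 else 0) + (if y < b then 1 else 0 :: nat))" for y
  have contribution: "(if b < y \<and> key y < key b then 1 else 0) + (if y < b \<and> key b < key y then 1 else 0)
    + (if a < y \<and> key y < key a then 1 else 0) + (if y < a \<and> key a < key y then 1 else 0)
    + (if y < a then 1 else 0) + (if y < b then 1 else (0::nat)) = 2 * h y" if "y \<in> F'" for y
  proof -
    have "key y \<noteq> key a" "y \<noteq> a" "y \<noteq> b" using others that by (auto simp: F'_def)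
    then show ?thesis using assms(4,5) unfolding h_def by (cases "key y < key a") auto
  qed
  have "inversions key (F - {a}) + card {l \<in> F. l < a} + (inversions key (F - {b}) + card {l \<in> F. l < b})
      = 2 * inversions key F' + 1 + (\<Sum>y\<in>F'. (if b < y \<and> key y < key b then 1 else 0)
        + (if y < b \<and> key b < key y then 1 else 0) + (if a < y \<and> key y < key a then 1 else 0)
        + (if y < a \<and> key a < key y then 1 else 0) + (if y < a then 1 else 0) + (if y < b then 1 else (0::nat)))"
    unfolding F_a F_b less_a less_b using \<open>finite F'\<close> \<open>a \<notin> F'\<close> \<open>b \<notin> F'\<close> assms(4)
    by (simp add: inversions_insert card_less_eq_sum sum.distrib)
  also have "\<dots> = 2 * inversions key F' + 1 + 2 * (\<Sum>y\<in>F'. h y)"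
    using contribution by (simp add: sum_distrib_left)
  finally show ?thesis by simp
qed

lemma inversions_sign_cancel:
  assumes "finite F" "a \<in> F" "b \<in> F" "a \<noteq> b" "key a = key b"
    and "\<And>y. y \<in> F - {a, b} \<Longrightarrow> key y \<noteq> key a"
  shows "(- 1) ^ inversions key (F - {a}) * (- 1) ^ card {l \<in> F. l < a} +
         (- 1) ^ inversions key (F - {b}) * (- 1) ^ card {l \<in> F. l < b} = (0 :: 'k::ring_1)"
proof -
  define A where "A = inversions key (F - {a}) + card {l \<in> F. l < a}"
  define B where "B = inversions key (F - {b}) + card {l \<in> F. l < b}"
  have "odd (A + B)"
  proof (cases "a < b")
    case True
    then show ?thesis using odd_inversions_swap[OF assms(1-3) True assms(5,6)] by (simp add: A_def B_def)
  next
    case False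
    then have "b < a" using assms(4) by simp
    moreover have "key y \<noteq> key b" if "y \<in> F - {b, a}" for y using assms(5,6) that by auto
    ultimately show ?thesis using odd_inversions_swap[OF assms(1,3,2) _ assms(5)[symmetric]]
      by (simp add: A_def B_def add.commute)
  qed
  then have "(- 1) ^ A + (- 1) ^ B = (0 :: 'k)" by (cases "even A") auto
  then show ?thesis by (simp add: A_def B_def power_add)
qed

section \<open>Matchings with a gapped part\<close>

locale gapped_matching =
  fixes n :: nat and E :: "nat set set" and M :: "nat set set" and e1 e2 :: "nat set"
  assumes simple: "simple_graph n E" and matching: "is_matching E M"
    and e1_in_M: "e1 \<in> M" and e2_in_M: "e2 \<in> M" and e1_neq_e2: "e1 \<noteq> e2"
    and gap: "\<And>r f. r \<in> M - {e1, e2} \<Longrightarrow> f \<in> M \<Longrightarrow> f \<noteq> r \<Longrightarrow> is_gap E r f"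
begin

definition "R = M - {e1, e2}"
definition "W = \<Union>M"
definition "P = e1 \<union> e2"
definition "key x = Min (THE r. r \<in> R \<and> x \<in> r)"
definition "transversal G \<longleftrightarrow> G \<subseteq> \<Union>R \<and> (\<forall>r\<in>R. card (G \<inter> r) = 1)"
definition "mins = Min ` R"
definition "p = (SOME p. p \<in> e1)"
definition "\<sigma> = insert p mins"

abbreviation "K j \<equiv> kos_basis n (sq_power2_gens E) j (sqfree_mon W)"

lemma M_subset_E: "M \<subseteq> E"
  using matching by (simp add: is_matching_def)

lemma disjoint_edges: "f \<in> M \<Longrightarrow> g \<in> M \<Longrightarrow> f \<noteq> g \<Longrightarrow> f \<inter> g = {}"
  using matching by (simp add: is_matching_def)

lemma card_edge: "e \<in> E \<Longrightarrow> card e = 2"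
  using simple by (simp add: simple_graph_def)

lemma finite_edge: "e \<in> E \<Longrightarrow> finite e"
  using card_edge by (metis card.infinite zero_neq_numeral)

lemma no_three_vertices_in_edge:
  assumes "r \<in> E" "t \<in> r" "u \<in> r" "v \<in> r" "t \<noteq> u" "u \<noteq> v" "t \<noteq> v"
  shows False
proof -
  have "card {t, u, v} \<le> card r" using assms finite_edge by (intro card_mono) auto
  then show False using card_edge[OF assms(1)] assms by simp
qed

lemma W_subset: "W \<subseteq> {..<n}"
  using M_subset_E simple by (auto simp: W_def simple_graph_def)

lemma finite_M: "finite M"
  using W_subset by (metis W_def finite_UnionD finite_lessThan finite_subset)

lemma card_W: "card W = 2 * card M"
proof -
  have "card W = (\<Sum>e\<in>M. card e)" unfolding W_def
    using finite_M M_subset_E finite_edge disjoint_edges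
    by (intro card_Union_disjoint) (auto simp: pairwise_def disjnt_def)
  also have "\<dots> = (\<Sum>e\<in>M. 2)" using M_subset_E card_edge by (intro sum.cong) auto
  finally show ?thesis by simp
qed

lemma card_M_ge_2: "2 \<le> card M"
  using card_mono[OF finite_M, of "{e1, e2}"] e1_in_M e2_in_M e1_neq_e2 by simp

lemma R_subset_M: "R \<subseteq> M"
  by (auto simp: R_def)

lemma finite_R: "finite R"
  using finite_M by (simp add: R_def)

lemma card_R: "card R = card M - 2"
  unfolding R_def using e1_in_M e2_in_M e1_neq_e2 finite_M by (simp add: card_Diff_subset)

lemma W_eq: "W = P \<union> \<Union>R"
  using e1_in_M e2_in_M by (auto simp: W_def P_def R_def)

lemma P_disjoint_R: "P \<inter> \<Union>R = {}"
  using disjoint_edges e1_in_M e2_in_M by (auto simp: P_def R_def)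

lemma finite_P: "finite P"
  using finite_edge M_subset_E e1_in_M e2_in_M by (auto simp: P_def)

lemma card_P: "card P = 4"
proof -
  have "e1 \<in> E" "e2 \<in> E" using M_subset_E e1_in_M e2_in_M by auto
  then show ?thesis using disjoint_edges[OF e1_in_M e2_in_M e1_neq_e2]
    by (simp add: P_def card_Un_disjoint finite_edge card_edge)
qed

lemma Min_edge: "r \<in> M \<Longrightarrow> Min r \<in> r"
  using M_subset_E card_edge finite_edge by (metis Min_in card.empty zero_neq_numeral subsetD)

lemma key_eq: "r \<in> R \<Longrightarrow> x \<in> r \<Longrightarrow> key x = Min r"
  unfolding key_def using disjoint_edges R_subset_M by (intro arg_cong[where f = Min] the_equality) auto

lemma inj_on_Min_R: "inj_on Min R"
  using Min_edge disjoint_edges R_subset_M by (intro inj_onI) (metis disjoint_iff subsetD)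

lemma p_in_e1: "p \<in> e1"
proof -
  have "e1 \<noteq> {}" using card_edge M_subset_E e1_in_M by fastforce
  then show ?thesis unfolding p_def by (meson ex_in_conv someI_ex)
qed

lemma p_notin_R: "p \<notin> \<Union>R"
  using p_in_e1 P_disjoint_R by (auto simp: P_def)

lemma mins_subset_R: "mins \<subseteq> \<Union>R"
  using Min_edge R_subset_M by (auto simp: mins_def)

lemma mins_Int: "r \<in> R \<Longrightarrow> mins \<inter> r = {Min r}"
  using Min_edge disjoint_edges R_subset_M by (auto simp: mins_def) blast

lemma transversal_mins: "transversal mins"
  unfolding transversal_def using mins_subset_R mins_Int by simp

lemma finite_\<sigma>: "finite \<sigma>"
  using finite_R by (simp add: \<sigma>_def mins_def)

lemma \<sigma>_Diff_p: "\<sigma> - {p} = mins"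
  using p_notin_R mins_subset_R by (auto simp: \<sigma>_def)

lemma card_\<sigma>: "card \<sigma> = Suc (card M - 2)"
proof -
  have "p \<notin> mins" using p_notin_R mins_subset_R by auto
  moreover have "card mins = card M - 2"
    using card_R inj_on_Min_R by (simp add: mins_def card_image)
  ultimately show ?thesis using finite_R by (simp add: \<sigma>_def mins_def)
qed

lemma mem_K_iff: "F \<in> K j \<longleftrightarrow> F \<subseteq> W \<and> card F = j \<and> two_disjoint_edges_in E (W - F)"
  by (rule kos_basis_sq_power2_gens[OF W_subset])

lemma two_disjoint_edges_in_M:
  "f \<in> M \<Longrightarrow> g \<in> M \<Longrightarrow> f \<noteq> g \<Longrightarrow> f \<union> g \<subseteq> U \<Longrightarrow> two_disjoint_edges_in E U"
  unfolding two_disjoint_edges_in_def using M_subset_E disjoint_edges by blast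

lemma \<sigma>_Int_R: "r \<in> R \<Longrightarrow> \<sigma> \<inter> r = {Min r}"
  using mins_Int p_notin_R by (auto simp: \<sigma>_def)

lemma \<sigma>_Int_e2: "\<sigma> \<inter> e2 = {}"
  using p_in_e1 disjoint_edges[OF e1_in_M e2_in_M e1_neq_e2] mins_subset_R P_disjoint_R
  by (auto simp: \<sigma>_def P_def)

lemma \<sigma>_facets: "x \<in> \<sigma> \<Longrightarrow> \<sigma> - {x} \<in> K (card M - 2)"
proof -
  assume x: "x \<in> \<sigma>"
  have "\<sigma> - {x} \<subseteq> W" using p_in_e1 mins_subset_R W_eq by (auto simp: \<sigma>_def P_def)
  moreover have "card (\<sigma> - {x}) = card M - 2" using x card_\<sigma> finite_\<sigma> by simp
  moreover have "two_disjoint_edges_in E (W - (\<sigma> - {x}))"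
  proof (cases "x = p")
    case True
    have "e1 \<union> e2 \<subseteq> W - mins" using mins_subset_R P_disjoint_R W_eq by (auto simp: P_def)
    then show ?thesis using True \<sigma>_Diff_p e1_in_M e2_in_M e1_neq_e2 two_disjoint_edges_in_M by metis
  next
    case False
    then obtain r where r: "r \<in> R" "x = Min r" using x by (auto simp: \<sigma>_def mins_def)
    then have "r \<union> e2 \<subseteq> W - (\<sigma> - {x})"
      using \<sigma>_Int_R \<sigma>_Int_e2 R_subset_M e2_in_M by (auto simp: W_def)
    moreover have "r \<noteq> e2" using r by (auto simp: R_def)
    ultimately show ?thesis using r R_subset_M e2_in_M two_disjoint_edges_in_M by blast
  qed
  ultimately show ?thesis using mem_K_iff by simp
qed

lemma transversal_Int:
  assumes "transversal G" "r \<in> R"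
  obtains t where "G \<inter> r = {t}"
  using assms unfolding transversal_def by (metis card_1_singletonE)

text \<open>If a vertex of e lay on an edge r of R, the gap condition would force the other end of e
  onto r as well; together with the vertex of the transversal F - {w} on r this gives r three
  vertices.\<close>

lemma edge_outside_subset_P:
  assumes e: "e \<in> E" "e \<subseteq> W - F" and tr: "transversal (F - {w})" and w: "w \<in> F"
  shows "e \<subseteq> P - {w}"
proof
  fix u assume u: "u \<in> e"
  obtain v where v: "v \<in> e" "u \<noteq> v" "e = {u, v}" using card_edge[OF e(1)] u
    by (metis card_2_iff insert_commute insert_iff singletonD)
  show "u \<in> P - {w}"
  proof (rule ccontr)
    assume "u \<notin> P - {w}"
    moreover have "u \<in> W" "u \<noteq> w" using u e w by auto
    ultimately obtain r where r: "r \<in> R" "u \<in> r" using W_eq by auto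
    obtain t where "(F - {w}) \<inter> r = {t}" using transversal_Int[OF tr r(1)] .
    then have t: "t \<in> F" "t \<in> r" by auto
    have "v \<in> W" "v \<notin> F" "u \<notin> F" using u v e by auto
    then obtain f where f: "f \<in> M" "v \<in> f" by (auto simp: W_def)
    show False
    proof (cases "f = r")
      case True
      then show False using no_three_vertices_in_edge[of r t u v] t r f v(2) M_subset_E R_subset_M
        \<open>v \<notin> F\<close> \<open>u \<notin> F\<close> by auto
    next
      case False
      then have "is_gap E r f" using gap r(1) f(1) by (auto simp: R_def)
      then show False using r(2) f(2) v(3) e(1) unfolding is_gap_def by blast
    qed
  qed
qed

lemma removed_vertex_in_R:
  assumes F: "F \<in> K (Suc (card M - 2))" and w: "w \<in> F" "transversal (F - {w})"
  shows "w \<in> \<Union>R"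
proof (rule ccontr)
  assume "w \<notin> \<Union>R"
  moreover have "F \<subseteq> W" using F unfolding mem_K_iff by blast
  ultimately have "w \<in> P" using w(1) unfolding W_eq by blast
  obtain e f where ef: "e \<in> E" "f \<in> E" "e \<inter> f = {}" "e \<union> f \<subseteq> W - F"
    using F unfolding mem_K_iff two_disjoint_edges_in_def by blast
  have "e \<subseteq> P - {w}" "f \<subseteq> P - {w}"
    using edge_outside_subset_P[OF _ _ w(2,1)] ef by auto
  then have "card (e \<union> f) \<le> card (P - {w})" using finite_P by (intro card_mono) auto
  moreover have "card (e \<union> f) = 4" using ef card_edge finite_edge by (simp add: card_Un_disjoint)
  moreover have "card (P - {w}) = 3" using card_P \<open>w \<in> P\<close> finite_P by simp
  ultimately show False by simp
qed

lemma not_transversal_Diff: "r \<in> R \<Longrightarrow> F \<inter> r = {x} \<Longrightarrow> \<not> transversal (F - {x})"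
proof
  assume "r \<in> R" "F \<inter> r = {x}" and tr: "transversal (F - {x})"
  then have "(F - {x}) \<inter> r = {}" "card ((F - {x}) \<inter> r) = 1"
    unfolding transversal_def by blast+
  then show False by simp
qed

lemma key_neq: "r \<in> R \<Longrightarrow> r' \<in> R \<Longrightarrow> r \<noteq> r' \<Longrightarrow> x \<in> r \<Longrightarrow> y \<in> r' \<Longrightarrow> key x \<noteq> key y"
  using key_eq inj_on_Min_R by (metis inj_onD)

lemma transversal_swap:
  assumes tr: "transversal (F - {w})" and w: "w \<in> F" "w \<in> r" "r \<in> R"
  obtains t where "t \<in> F" "t \<in> r" "t \<noteq> w" "transversal (F - {t})"
    "\<forall>x\<in>F - {t, w}. \<exists>r'\<in>R. r' \<noteq> r \<and> F \<inter> r' = {x}"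
proof -
  obtain t where t: "(F - {w}) \<inter> r = {t}" using transversal_Int[OF tr w(3)] .
  then have t_in: "t \<in> F" "t \<in> r" "t \<noteq> w" by auto
  have F_R: "F \<subseteq> \<Union>R" using tr w unfolding transversal_def by auto
  have F_r: "F \<inter> r = {t, w}" using t w by auto
  have other: "F \<inter> r' = (F - {w}) \<inter> r'" "(F - {t}) \<inter> r' = (F - {w}) \<inter> r'"
    if "r' \<in> R" "r' \<noteq> r" for r'
  proof -
    have "r \<inter> r' = {}" using that w(3) disjoint_edges R_subset_M by auto
    then show "F \<inter> r' = (F - {w}) \<inter> r'" "(F - {t}) \<inter> r' = (F - {w}) \<inter> r'"
      using w(2) t_in(2) by auto
  qed
  have "transversal (F - {t})"
    unfolding transversal_def
  proof (intro conjI ballI)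
    show "F - {t} \<subseteq> \<Union>R" using F_R by auto
  next
    fix r' assume r': "r' \<in> R"
    show "card ((F - {t}) \<inter> r') = 1"
    proof (cases "r' = r")
      case True
      then have "(F - {t}) \<inter> r' = {w}" using F_r t_in by auto
      then show ?thesis by simp
    next
      case False
      then show ?thesis using other(2)[OF r' False] tr r' unfolding transversal_def by simp
    qed
  qed
  moreover have "\<forall>x\<in>F - {t, w}. \<exists>r'\<in>R. r' \<noteq> r \<and> F \<inter> r' = {x}"
  proof
    fix x assume x: "x \<in> F - {t, w}"
    obtain r' where r': "r' \<in> R" "x \<in> r'" using x F_R by auto
    then have "r' \<noteq> r" using F_r x by auto
    obtain y where "(F - {w}) \<inter> r' = {y}" using transversal_Int[OF tr r'(1)] .
    then have "F \<inter> r' = {y}" using other(1)[OF r'(1) \<open>r' \<noteq> r\<close>] by simp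
    then have "F \<inter> r' = {x}" using r' x by auto
    then show "\<exists>r'\<in>R. r' \<noteq> r \<and> F \<inter> r' = {x}" using r'(1) \<open>r' \<noteq> r\<close> by blast
  qed
  ultimately show ?thesis by (rule that[OF t_in])
qed

definition transversal_sign :: "nat set \<Rightarrow> 'k::field" where
  "transversal_sign G = (if transversal G then (- 1) ^ inversions key G else 0)"

lemma transversal_sign_mult_kos_coeff_eq_0:
  assumes "\<And>x. x \<in> F \<Longrightarrow> G = F - {x} \<Longrightarrow> \<not> transversal G"
  shows "transversal_sign G * kos_coeff F G = (0 :: 'k::field)"
proof (cases "kos_coeff F G = (0 :: 'k)")
  case False
  then obtain x where "x \<in> F" "G = F - {x}" by (rule kos_coeff_neq_0_imp)
  then show ?thesis using assms by (simp add: transversal_sign_def)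
qed simp

lemma transversal_sign_cocycle:
  assumes F: "F \<in> K (Suc (card M - 2))"
  shows "(\<Sum>G\<in>K (card M - 2). transversal_sign G * kos_coeff F G) = (0 :: 'k::field)"
proof (cases "\<exists>w\<in>F. transversal (F - {w})")
  case False
  then have "transversal_sign G * kos_coeff F G = (0 :: 'k)" for G
    by (intro transversal_sign_mult_kos_coeff_eq_0) simp
  then show ?thesis by (intro sum.neutral) auto
next
  case True
  then obtain w where w: "w \<in> F" "transversal (F - {w})" by blast
  then obtain r where r: "r \<in> R" "w \<in> r" using removed_vertex_in_R[OF F] by blast
  obtain t where t: "t \<in> F" "t \<in> r" "t \<noteq> w" "transversal (F - {t})"
    and singles: "\<forall>x\<in>F - {t, w}. \<exists>r'\<in>R. r' \<noteq> r \<and> F \<inter> r' = {x}"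
    by (rule transversal_swap[OF w(2,1) r(2,1)])
  have vanish: "transversal_sign G * kos_coeff F G = (0 :: 'k)"
    if "G \<notin> {F - {w}, F - {t}}" for G
  proof (rule transversal_sign_mult_kos_coeff_eq_0)
    fix x assume x: "x \<in> F" "G = F - {x}"
    then have "x \<in> F - {t, w}" using that by auto
    then obtain r' where "r' \<in> R" "F \<inter> r' = {x}" using singles by blast
    then show "\<not> transversal G" using not_transversal_Diff x(2) by blast
  qed
  have "(\<Sum>G\<in>K (card M - 2). transversal_sign G * kos_coeff F G)
      = (\<Sum>G\<in>{F - {w}, F - {t}}. transversal_sign G * kos_coeff F G :: 'k)"
    by (rule sum.mono_neutral_right[OF finite_kos_basis])
      (use kos_basis_Diff_singleton[OF F] w t vanish in auto)
  also have "\<dots> = transversal_sign (F - {w}) * kos_coeff F (F - {w})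
      + transversal_sign (F - {t}) * kos_coeff F (F - {t})"
    using w t by (subst sum.insert) auto
  also have "\<dots> = (- 1) ^ inversions key (F - {w}) * (- 1) ^ card {l \<in> F. l < w}
      + (- 1) ^ inversions key (F - {t}) * (- 1) ^ card {l \<in> F. l < t}"
    using w t by (simp add: transversal_sign_def kos_coeff_Diff_singleton)
  also have "\<dots> = 0"
  proof (rule inversions_sign_cancel)
    show "finite F" by (rule kos_basis_finite[OF F])
    show "w \<in> F" "t \<in> F" "w \<noteq> t" using w t by auto
    show "key w = key t" using key_eq[OF r] key_eq[OF r(1) t(2)] by simp
    show "key y \<noteq> key w" if y: "y \<in> F - {w, t}" for y
    proof -
      obtain r' where "r' \<in> R" "r' \<noteq> r" "F \<inter> r' = {y}" using singles y by blast
      then show ?thesis using key_neq r by blast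
    qed
  qed
  finally show ?thesis .
qed

lemma transversal_sign_pairing_boundary_neq_0:
  "(\<Sum>G\<in>K (card M - 2). transversal_sign G * (if G \<in> K (card M - 2) then kos_coeff \<sigma> G else 0))
    \<noteq> (0 :: 'k::field)"
proof -
  have mins_K: "mins \<in> K (card M - 2)" using \<sigma>_facets[of p] \<sigma>_Diff_p by (simp add: \<sigma>_def)
  have vanish: "transversal_sign G * kos_coeff \<sigma> G = (0 :: 'k)" if "G \<noteq> mins" for G
  proof (rule transversal_sign_mult_kos_coeff_eq_0)
    fix x assume x: "x \<in> \<sigma>" "G = \<sigma> - {x}"
    then have "x \<noteq> p" using that \<sigma>_Diff_p by auto
    then have "p \<in> G" using x(2) by (simp add: \<sigma>_def)
    then show "\<not> transversal G" using p_notin_R unfolding transversal_def by blast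
  qed
  have "(\<Sum>G\<in>K (card M - 2) - {mins}.
      transversal_sign G * (if G \<in> K (card M - 2) then kos_coeff \<sigma> G else 0)) = (0 :: 'k)"
    by (rule sum.neutral) (use vanish in auto)
  then have "(\<Sum>G\<in>K (card M - 2). transversal_sign G * (if G \<in> K (card M - 2) then kos_coeff \<sigma> G else 0))
      = (transversal_sign mins * kos_coeff \<sigma> mins :: 'k)"
    by (simp add: sum.remove[OF finite_kos_basis mins_K] mins_K)
  also have "\<dots> = (- 1) ^ inversions key mins * (- 1) ^ card {l \<in> \<sigma>. l < p}"
    using transversal_mins kos_coeff_Diff_singleton[of p \<sigma>] \<sigma>_Diff_p
    by (simp add: transversal_sign_def \<sigma>_def)
  finally show ?thesis by simp
qed

lemma betti_neq_0:
  "betti TYPE('k::field) n (sq_power2_gens E) (card M - 2) (sqfree_mon W) \<noteq> 0"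
proof (rule betti_neq_0_if_cocycle_pairing)
  let ?z = "\<lambda>F. if F \<in> K (card M - 2) then kos_coeff \<sigma> F else 0 :: 'k"
  show "?z \<in> kos_chains n (sq_power2_gens E) (card M - 2) (sqfree_mon W)"
    by (simp add: kos_chains_def)
  show "kos_diff n (sq_power2_gens E) (card M - 2) (sqfree_mon W) ?z = 0"
    by (rule kos_diff_boundary_eq_0[OF finite_\<sigma> \<sigma>_facets])
qed (fact transversal_sign_cocycle transversal_sign_pairing_boundary_neq_0)+

lemma reg_ge: "ereal (real (card M) + 2) \<le> reg TYPE('k::field) n (sq_power2_gens E)"
proof -
  have "sum (sqfree_mon W) {..<n} = card ({..<n} \<inter> W)"
    by (simp add: sqfree_mon_def sum.If_cases)
  also have "\<dots> = 2 * card M" using W_subset card_W by (simp add: Int_absorb1)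
  finally have "sum (sqfree_mon W) {..<n} = 2 * card M" .
  moreover have "\<forall>l\<ge>n. sqfree_mon W l = 0" using W_subset by (auto simp: sqfree_mon_def)
  then have "ereal (real (sum (sqfree_mon W) {..<n}) - real (card M - 2))
      \<le> reg TYPE('k) n (sq_power2_gens E)"
    by (rule reg_ge_if_betti_neq_0[OF _ betti_neq_0])
  ultimately show ?thesis using card_M_ge_2 by (simp add: of_nat_diff)
qed

end

lemma two_le_card_obtains:
  assumes "2 \<le> card A"
  obtains x y where "x \<in> A" "y \<in> A" "x \<noteq> y"
proof -
  have "finite A" using assms by (intro card_ge_0_finite) simp
  moreover have "\<not> card A \<le> Suc 0" using assms by simp
  ultimately show ?thesis using card_le_Suc0_iff_eq that by blast
qed

section \<open>Admissible matchings\<close>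

lemma gapped_matching_pair:
  assumes "simple_graph n E" "is_matching E M" "e1 \<in> M" "e2 \<in> M" "e1 \<noteq> e2"
  shows "gapped_matching n E {e1, e2} e1 e2"
  using assms by unfold_locales (auto simp: is_matching_def)

lemma admissible_seq_2_excess:
  assumes "admissible_seq 2 cs"
  shows "(\<Sum>k<length cs. cs ! k - 1) \<le> 1"
proof -
  have "(\<Sum>k<length cs. cs ! k) = (\<Sum>k<length cs. (cs ! k - 1) + 1)"
  proof (rule sum.cong)
    show "cs ! k = cs ! k - 1 + 1" if "k \<in> {..<length cs}" for k
    proof -
      have "cs ! k \<in> set cs" using that by simp
      then show ?thesis using assms by (auto simp: admissible_seq_def)
    qed
  qed simp
  also have "\<dots> = (\<Sum>k<length cs. cs ! k - 1) + length cs" unfolding sum.distrib by simp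
  finally have "sum_list cs = (\<Sum>k<length cs. cs ! k - 1) + length cs"
    by (simp add: sum_list_sum_nth atLeast0LessThan)
  moreover have "int (sum_list cs) \<le> int (length cs) + 1"
    using assms by (simp add: admissible_seq_def)
  ultimately show ?thesis by linarith
qed

lemma admissible_seq_2_large_part:
  fixes Ms :: "'a set list"
  assumes seq: "admissible_seq 2 (map card Ms)" and card_M: "2 \<le> card (\<Union>(set Ms))"
  obtains e1 e2 where "e1 \<in> \<Union>(set Ms)" "e2 \<in> \<Union>(set Ms)" "e1 \<noteq> e2"
    "\<forall>i<length Ms. 2 \<le> card (Ms ! i) \<longrightarrow> Ms ! i = {e1, e2}"
proof (cases "\<exists>k<length Ms. 2 \<le> card (Ms ! k)")
  case True
  define c where "c i = card (Ms ! i)" for i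
  have excess: "(\<Sum>i<length Ms. c i - 1) \<le> 1"
    using admissible_seq_2_excess[OF seq] by (simp add: c_def)
  obtain k where k: "k < length Ms" "2 \<le> c k" using True by (auto simp: c_def)
  have "c k - 1 \<le> (\<Sum>i<length Ms. c i - 1)" using k(1) by (intro member_le_sum) auto
  then have "c k = 2" using k(2) excess by simp
  then obtain e1 e2 where e: "e1 \<noteq> e2" "Ms ! k = {e1, e2}" unfolding c_def by (meson card_2_iff)
  have "i = k" if "i < length Ms" "2 \<le> c i" for i
  proof (rule ccontr)
    assume "i \<noteq> k"
    then have "(\<Sum>j\<in>{i, k}. c j - 1) \<le> (\<Sum>j<length Ms. c j - 1)"
      using that k(1) by (intro sum_mono2) auto
    then show False using \<open>i \<noteq> k\<close> that(2) k(2) excess by simp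
  qed
  then have "\<forall>i<length Ms. 2 \<le> card (Ms ! i) \<longrightarrow> Ms ! i = {e1, e2}" using e(2) by (auto simp: c_def)
  moreover have "e1 \<in> \<Union>(set Ms)" "e2 \<in> \<Union>(set Ms)" using e k(1) nth_mem by blast+
  ultimately show ?thesis using that e(1) by blast
next
  case False
  obtain e1 e2 where "e1 \<in> \<Union>(set Ms)" "e2 \<in> \<Union>(set Ms)" "e1 \<noteq> e2"
    using card_M by (rule two_le_card_obtains)
  then show ?thesis using that False by auto
qed

lemma admissible_matching_2_gapped:
  assumes simple: "simple_graph n E" and adm: "admissible_matching E 2 M" and card_M: "2 \<le> card M"
  obtains e1 e2 where "gapped_matching n E M e1 e2"
proof -
  obtain Ms :: "nat set set list" where union: "\<Union>(set Ms) = M" and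
    gaps: "\<forall>i < length Ms. \<forall>j < length Ms. i \<noteq> j \<longrightarrow> (\<forall>e\<in>Ms ! i. \<forall>f\<in>Ms ! j. is_gap E e f)" and
    seq: "admissible_seq 2 (map card Ms)"
    using adm unfolding admissible_matching_def by blast
  obtain e1 e2 where e: "e1 \<in> M" "e2 \<in> M" "e1 \<noteq> e2"
    and large: "\<forall>i<length Ms. 2 \<le> card (Ms ! i) \<longrightarrow> Ms ! i = {e1, e2}"
    using admissible_seq_2_large_part[OF seq] card_M unfolding union by blast
  have "finite M" using card_M by (intro card_ge_0_finite) simp
  have part: "\<exists>i<length Ms. e \<in> Ms ! i" if "e \<in> M" for e
    using that union by (metis UnionE in_set_conv_nth)
  have "is_gap E r f" if r: "r \<in> M - {e1, e2}" and f: "f \<in> M" "f \<noteq> r" for r f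
  proof -
    obtain i where i: "i < length Ms" "r \<in> Ms ! i" using part r by blast
    obtain j where j: "j < length Ms" "f \<in> Ms ! j" using part f(1) by blast
    have "finite (Ms ! i)" using \<open>finite M\<close> i(1) union by (metis Sup_upper finite_subset nth_mem)
    moreover have "card (Ms ! i) \<le> 1"
    proof (rule ccontr)
      assume "\<not> card (Ms ! i) \<le> 1"
      then have "Ms ! i = {e1, e2}" using large i(1) by simp
      then show False using i(2) r by blast
    qed
    ultimately have "i \<noteq> j"
      using card_mono[of "Ms ! i" "{r, f}"] i(2) j(2) f(2) by auto
    then show ?thesis using gaps i j by blast
  qed
  moreover have "is_matching E M" using adm by (simp add: admissible_matching_def)
  ultimately have "gapped_matching n E M e1 e2" using simple e by unfold_locales
  then show ?thesis by (rule that)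
qed

lemma simple_graph_finite: "simple_graph n E \<Longrightarrow> finite E"
  unfolding simple_graph_def by (rule finite_subset[of _ "Pow {..<n}"]) auto

lemma finite_card_set_of_subsets:
  assumes "finite E" "\<And>M. P M \<Longrightarrow> M \<subseteq> E"
  shows "finite {card M | M. P M}"
proof -
  have "{card M | M. P M} \<subseteq> card ` Pow E" using assms(2) by blast
  then show ?thesis by (rule finite_subset) (simp add: assms(1))
qed

lemma matching_number_attained:
  assumes "finite E"
  obtains M where "is_matching E M" "card M = matching_number E"
proof -
  have "finite {card M | M. is_matching E M}"
    using assms by (rule finite_card_set_of_subsets) (simp add: is_matching_def)
  moreover have "is_matching E {}" by (simp add: is_matching_def)
  then have "card {} \<in> {card M | M. is_matching E M}" by (intro CollectI exI[of _ "{}"]) simp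
  ultimately have "matching_number E \<in> {card M | M. is_matching E M}"
    unfolding matching_number_def by (intro Max_in) auto
  then obtain M where "is_matching E M" "card M = matching_number E" by auto
  then show ?thesis by (rule that)
qed

lemma aim_attained:
  assumes "finite E" "0 < aim E k"
  obtains M where "admissible_matching E k M" "card M = aim E k"
proof -
  have "finite {card M | M. admissible_matching E k M}"
    using assms(1) by (rule finite_card_set_of_subsets) (simp add: admissible_matching_def is_matching_def)
  then have "aim E k \<in> {card M | M. admissible_matching E k M} \<union> {0}"
    unfolding aim_def by (intro Max_in) auto
  then obtain M where "admissible_matching E k M" "card M = aim E k" using assms(2) by auto
  then show ?thesis by (rule that)
qed

theorem corollary4p11:
  fixes n :: nat and E :: "nat set set"
  assumes "simple_graph n E"
    and "matching_number E \<ge> 2"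
  shows "reg TYPE('k::field) n (sq_power2_gens E) \<ge> ereal (real (aim E 2) + 2)"
proof -
  have "finite E" using assms(1) by (rule simple_graph_finite)
  have reg_ge_4: "ereal 4 \<le> reg TYPE('k) n (sq_power2_gens E)"
  proof -
    obtain M where M: "is_matching E M" "card M = matching_number E"
      by (rule matching_number_attained[OF \<open>finite E\<close>])
    then have "2 \<le> card M" using assms(2) by simp
    then obtain e1 e2 where "e1 \<in> M" "e2 \<in> M" "e1 \<noteq> e2" by (rule two_le_card_obtains)
    then have "gapped_matching n E {e1, e2} e1 e2" by (rule gapped_matching_pair[OF assms(1) M(1)])
    from gapped_matching.reg_ge[OF this] show ?thesis using \<open>e1 \<noteq> e2\<close> by simp
  qed
  show ?thesis
  proof (cases "aim E 2 \<le> 2")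
    case True
    then have "ereal (real (aim E 2) + 2) \<le> ereal 4" by simp
    then show ?thesis using reg_ge_4 by (rule order_trans)
  next
    case False
    then have "0 < aim E 2" by simp
    then obtain M where M: "admissible_matching E 2 M" "card M = aim E 2"
      by (rule aim_attained[OF \<open>finite E\<close>])
    then have "2 \<le> card M" using False by simp
    then obtain e1 e2 where "gapped_matching n E M e1 e2"
      by (rule admissible_matching_2_gapped[OF assms(1) M(1)])
    from gapped_matching.reg_ge[OF this] show ?thesis using M(2) by simp
  qed
qed

end
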